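(* Let $(G,M,\Delta)$ be a Garside structure, $(H,N,\delta)$ a parabolic substructure with $H\ne\{1\}$, and $T$ the set of $(H,N)$-reduced elements of $G$. Let $\mathcal S=\mathrm{Div}(\Delta)\setminus\{1\}$ and let $\lg$ denote word length in $G$ with respect to $\mathcal S$. For a right coset $C$ of $H$ in $G$ put $\lg(C)=\min\{\lg(\beta):\beta\in C\}$. Then $\lg(\theta)=\lg(H\theta)$ for every $\theta\in T$.
   Context: Let $G$ be a group and $M$ a submonoid with $M\cap M^{-1}=\{1\}$. Define partial orders on $G$ by $\alpha\le_L\beta$ iff $\alpha^{-1}\beta\in M$, and $\alpha\le_R\beta$ iff $\beta\alpha^{-1}\in M$. For $a\in M$ let $\mathrm{Div}_L(a)=\{b\in M: b\le_L a\}$, $\mathrm{Div}_R(a)=\{b\in M: b\le_R a\}$; $a$ is balanced if these coincide, and then $\mathrm{Div}(a)$ denotes this set. $M$ is Noetherian if each $a\in M$ admits an integer $n$ such that $a$ is not a product of more than $n$ non-trivial factors. A Garside structure $(G,M,\Delta)$ consists of such $G,M$ and a balanced $\Delta\in M$ such that: $M$ is Noetherian; $\mathrm{Div}(\Delta)$ is finite and generates $M$ as a monoid and $G$ as a group; $(G,\le_L)$ is a lattice (with meet $\wedge_L$). A parabolic substructure is a triple $(H,N,\delta)$ where $\delta\in M$ is balanced, $H$ (resp. $N$) is the subgroup of $G$ (resp. submonoid of $M$) generated by $\mathrm{Div}(\delta)$, and $\mathrm{Div}(\delta)=\mathrm{Div}(\Delta)\cap N$. Put $\omega=\delta^{-1}\Delta\in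 M$. An element $a\in M$ is unmovable if $\Delta\not\le_L a$. Every $\alpha\in G$ has a unique right $\Delta$-form $\alpha=a\Delta^p$ with $a\in M$ unmovable and $p\in\mathbb Z$. An element $a\in M$ is $N$-reduced if $a\wedge_L\delta=1$. An element $\alpha\in G$ with right $\Delta$-form $a\Delta^p$ is $(H,N)$-reduced if $a$ is $N$-reduced and either $p=0$, or $p<0$ and $\omega\not\le_L a$. *)

theory Defs
  imports "HOL-Algebra.Algebra"
begin

definition lprod :: "('a, 'b) monoid_scheme \<Rightarrow> 'a list \<Rightarrow> 'a" where
  "lprod G xs = foldr (\<lambda>x y. x \<otimes>\<^bsub>G\<^esub> y) xs \<one>\<^bsub>G\<^esub>"

definition monoid_gen :: "('a, 'b) monoid_scheme \<Rightarrow> 'a set \<Rightarrow> 'a set" where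
  "monoid_gen G A = {lprod G xs | xs. set xs \<subseteq> A}"

definition is_submonoid :: "('a, 'b) monoid_scheme \<Rightarrow> 'a set \<Rightarrow> bool" where
  "is_submonoid G M \<longleftrightarrow> M \<subseteq> carrier G \<and> \<one>\<^bsub>G\<^esub> \<in> M \<and>
     (\<forall>x\<in>M. \<forall>y\<in>M. x \<otimes>\<^bsub>G\<^esub> y \<in> M)"

definition leqL :: "('a, 'b) monoid_scheme \<Rightarrow> 'a set \<Rightarrow> 'a \<Rightarrow> 'a \<Rightarrow> bool" where
  "leqL G M \<alpha> \<beta> \<longleftrightarrow> inv\<^bsub>G\<^esub> \<alpha> \<otimes>\<^bsub>G\<^esub> \<beta> \<in> M"

definition leqR :: "('a, 'b) monoid_scheme \<Rightarrow> 'a set \<Rightarrow> 'a \<Rightarrow> 'a \<Rightarrow> bool" where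
  "leqR G M \<alpha> \<beta> \<longleftrightarrow> \<beta> \<otimes>\<^bsub>G\<^esub> inv\<^bsub>G\<^esub> \<alpha> \<in> M"

definition DivL :: "('a, 'b) monoid_scheme \<Rightarrow> 'a set \<Rightarrow> 'a \<Rightarrow> 'a set" where
  "DivL G M a = {b \<in> M. leqL G M b a}"

definition DivR :: "('a, 'b) monoid_scheme \<Rightarrow> 'a set \<Rightarrow> 'a \<Rightarrow> 'a set" where
  "DivR G M a = {b \<in> M. leqR G M b a}"

definition balanced :: "('a, 'b) monoid_scheme \<Rightarrow> 'a set \<Rightarrow> 'a \<Rightarrow> bool" where
  "balanced G M a \<longleftrightarrow> a \<in> M \<and> DivL G M a = DivR G M a"

text \<open>For balanced a, Div(a) is the common value; we use DivL.\<close>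
definition Div :: "('a, 'b) monoid_scheme \<Rightarrow> 'a set \<Rightarrow> 'a \<Rightarrow> 'a set" where
  "Div G M a = DivL G M a"

definition noetherian :: "('a, 'b) monoid_scheme \<Rightarrow> 'a set \<Rightarrow> bool" where
  "noetherian G M \<longleftrightarrow> (\<forall>a\<in>M. \<exists>n::nat. \<forall>xs. set xs \<subseteq> M - {\<one>\<^bsub>G\<^esub>} \<and> lprod G xs = a
       \<longrightarrow> length xs \<le> n)"

definition is_glbL :: "('a, 'b) monoid_scheme \<Rightarrow> 'a set \<Rightarrow> 'a \<Rightarrow> 'a \<Rightarrow> 'a \<Rightarrow> bool" where
  "is_glbL G M a b m \<longleftrightarrow> m \<in> carrier G \<and> leqL G M m a \<and> leqL G M m b \<and>
     (\<forall>c\<in>carrier G. leqL G M c a \<and> leqL G M c b \<longrightarrow> leqL G M c m)"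

definition is_lubL :: "('a, 'b) monoid_scheme \<Rightarrow> 'a set \<Rightarrow> 'a \<Rightarrow> 'a \<Rightarrow> 'a \<Rightarrow> bool" where
  "is_lubL G M a b j \<longleftrightarrow> j \<in> carrier G \<and> leqL G M a j \<and> leqL G M b j \<and>
     (\<forall>c\<in>carrier G. leqL G M a c \<and> leqL G M b c \<longrightarrow> leqL G M j c)"

definition latticeL :: "('a, 'b) monoid_scheme \<Rightarrow> 'a set \<Rightarrow> bool" where
  "latticeL G M \<longleftrightarrow> (\<forall>a\<in>carrier G. \<forall>b\<in>carrier G.
      (\<exists>m. is_glbL G M a b m) \<and> (\<exists>j. is_lubL G M a b j))"

definition meetL :: "('a, 'b) monoid_scheme \<Rightarrow> 'a set \<Rightarrow> 'a \<Rightarrow> 'a \<Rightarrow> 'a" where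
  "meetL G M a b = (THE m. is_glbL G M a b m)"

definition garside :: "('a, 'b) monoid_scheme \<Rightarrow> 'a set \<Rightarrow> 'a \<Rightarrow> bool" where
  "garside G M \<Delta> \<longleftrightarrow> group G \<and> is_submonoid G M \<and>
     {x \<in> M. inv\<^bsub>G\<^esub> x \<in> M} = {\<one>\<^bsub>G\<^esub>} \<and>
     balanced G M \<Delta> \<and> noetherian G M \<and> finite (Div G M \<Delta>) \<and>
     monoid_gen G (Div G M \<Delta>) = M \<and> generate G (Div G M \<Delta>) = carrier G \<and>
     latticeL G M"

definition parabolic :: "('a, 'b) monoid_scheme \<Rightarrow> 'a set \<Rightarrow> 'a \<Rightarrow> 'a set \<Rightarrow> 'a set \<Rightarrow> 'a \<Rightarrow> bool" where
  "parabolic G M \<Delta> H N \<delta> \<longleftrightarrow> balanced G M \<delta> \<and>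
     H = generate G (Div G M \<delta>) \<and> N = monoid_gen G (Div G M \<delta>) \<and>
     Div G M \<delta> = Div G M \<Delta> \<inter> N"

definition unmovable :: "('a, 'b) monoid_scheme \<Rightarrow> 'a set \<Rightarrow> 'a \<Rightarrow> 'a \<Rightarrow> bool" where
  "unmovable G M \<Delta> a \<longleftrightarrow> a \<in> M \<and> \<not> leqL G M \<Delta> a"

definition N_reduced :: "('a, 'b) monoid_scheme \<Rightarrow> 'a set \<Rightarrow> 'a \<Rightarrow> 'a \<Rightarrow> bool" where
  "N_reduced G M \<delta> a \<longleftrightarrow> a \<in> M \<and> meetL G M a \<delta> = \<one>\<^bsub>G\<^esub>"

text \<open>(H,N)-reduced: the right Delta-form a Delta^p (unique) satisfies the conditions.\<close>
definition HN_reduced :: "('a, 'b) monoid_scheme \<Rightarrow> 'a set \<Rightarrow> 'a \<Rightarrow> 'a \<Rightarrow> 'a \<Rightarrow> bool" where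
  "HN_reduced G M \<Delta> \<delta> \<alpha> \<longleftrightarrow> \<alpha> \<in> carrier G \<and>
     (\<exists>a (p::int). unmovable G M \<Delta> a \<and> \<alpha> = a \<otimes>\<^bsub>G\<^esub> (\<Delta> [^]\<^bsub>G\<^esub> p) \<and>
        N_reduced G M \<delta> a \<and>
        (p = 0 \<or> (p < 0 \<and> \<not> leqL G M (inv\<^bsub>G\<^esub> \<delta> \<otimes>\<^bsub>G\<^esub> \<Delta>) a)))"

definition word_len :: "('a, 'b) monoid_scheme \<Rightarrow> 'a set \<Rightarrow> 'a \<Rightarrow> nat" where
  "word_len G S \<alpha> = (LEAST n. \<exists>xs. length xs = n \<and>
      set xs \<subseteq> S \<union> (\<lambda>s. inv\<^bsub>G\<^esub> s) ` S \<and> lprod G xs = \<alpha>)"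

definition set_len :: "('a, 'b) monoid_scheme \<Rightarrow> 'a set \<Rightarrow> 'a set \<Rightarrow> nat" where
  "set_len G S C = (LEAST n. \<exists>\<beta>\<in>C. word_len G S \<beta> = n)"

end

theory Submission
  imports Defs
begin

(* Write \<preceq> for \<le>\<^sub>L and the reduced element as \<theta> = a \<Delta>\<^sup>-\<^sup>q with q \<ge> 0, where a is unmovable,
   N-reduced, and either q = 0 or \<omega> is not a prefix of a.  Left-greedy
   factorisation of a gives a word of length max (sup a) q for \<theta>, where sup a is the least r
   with a \<preceq> \<Delta>\<^sup>r.  Conversely, each letter moves one of the bounds in \<Delta>\<^sup>-\<^sup>l \<preceq> x \<preceq> \<Delta>\<^sup>k by one
   step, so an x of length n satisfies such bounds with k + l = n.  For x = h \<theta> with h \<in> H,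
   N-reducedness of a lets h be cancelled from h a \<preceq> \<Delta>\<^sup>k\<^sup>+\<^sup>q, giving sup a \<le> k + q; and as
   \<omega> is not a prefix of a, neither is \<Delta> a prefix of h a, which forces q \<le> l. *)

section \<open>Words in a group\<close>

context monoid
begin

lemma lprod_Nil [simp]: "lprod G [] = \<one>"
  by (simp add: lprod_def)

lemma lprod_Cons [simp]: "lprod G (x # xs) = x \<otimes> lprod G xs"
  by (simp add: lprod_def)

lemma lprod_closed: "set xs \<subseteq> carrier G \<Longrightarrow> lprod G xs \<in> carrier G"
  by (induction xs) auto

lemma lprod_append:
  "set xs \<subseteq> carrier G \<Longrightarrow> set ys \<subseteq> carrier G \<Longrightarrow> lprod G (xs @ ys) = lprod G xs \<otimes> lprod G ys"
  by (induction xs) (auto simp: m_assoc lprod_closed)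

lemma monoid_gen_one: "\<one> \<in> monoid_gen G A"
  unfolding monoid_gen_def by (auto intro: exI[of _ "[]"])

lemma monoid_gen_incl: "A \<subseteq> carrier G \<Longrightarrow> x \<in> A \<Longrightarrow> x \<in> monoid_gen G A"
  unfolding monoid_gen_def by (auto intro!: exI[of _ "[x]"])

lemma monoid_gen_mult:
  assumes "A \<subseteq> carrier G" "x \<in> monoid_gen G A" "y \<in> monoid_gen G A"
  shows "x \<otimes> y \<in> monoid_gen G A"
proof -
  obtain xs ys where "set xs \<subseteq> A" "x = lprod G xs" "set ys \<subseteq> A" "y = lprod G ys"
    using assms(2,3) by (auto simp: monoid_gen_def)
  with assms(1) have "x \<otimes> y = lprod G (xs @ ys)" "set (xs @ ys) \<subseteq> A"
    by (auto simp: lprod_append)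
  then show ?thesis
    unfolding monoid_gen_def by blast
qed

lemma monoid_gen_subset:
  assumes "A \<subseteq> M" "\<one> \<in> M" "\<And>x y. x \<in> M \<Longrightarrow> y \<in> M \<Longrightarrow> x \<otimes> y \<in> M"
  shows "monoid_gen G A \<subseteq> M"
proof
  fix x assume "x \<in> monoid_gen G A"
  then obtain xs where "set xs \<subseteq> A" "x = lprod G xs"
    by (auto simp: monoid_gen_def)
  moreover have "set xs \<subseteq> M \<Longrightarrow> lprod G xs \<in> M"
    by (induction xs) (auto simp: assms(2,3))
  ultimately show "x \<in> M"
    using assms(1) by auto
qed

lemma monoid_gen_induct [consumes 1, case_names one mult]:
  assumes "x \<in> monoid_gen G A" "P \<one>"
    and "\<And>a y. a \<in> A \<Longrightarrow> y \<in> monoid_gen G A \<Longrightarrow> P y \<Longrightarrow> P (a \<otimes> y)"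
  shows "P x"
proof -
  obtain xs where xs: "set xs \<subseteq> A" "x = lprod G xs"
    using assms(1) by (auto simp: monoid_gen_def)
  have "set xs \<subseteq> A \<Longrightarrow> P (lprod G xs)"
  proof (induction xs)
    case (Cons a xs)
    then have "lprod G xs \<in> monoid_gen G A"
      by (auto simp: monoid_gen_def)
    with Cons show ?case
      using assms(3) by auto
  qed (simp add: assms(2))
  with xs show ?thesis by simp
qed

end

context group
begin

lemma inv_mult_cancel_left [simp]: "x \<in> carrier G \<Longrightarrow> y \<in> carrier G \<Longrightarrow> inv x \<otimes> (x \<otimes> y) = y"
  by (simp add: m_assoc[symmetric])

lemma mult_inv_cancel_left [simp]: "x \<in> carrier G \<Longrightarrow> y \<in> carrier G \<Longrightarrow> x \<otimes> (inv x \<otimes> y) = y"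
  by (simp add: m_assoc[symmetric])

lemma inv_mult_nat_pow_comm: "x \<in> carrier G \<Longrightarrow> inv x \<otimes> x [^] (n::nat) = x [^] n \<otimes> inv x"
  by (simp add: inv_solve_left' m_assoc[symmetric] nat_pow_Suc2[symmetric]) (simp add: m_assoc)

lemma generate_Diff_one: "A \<subseteq> carrier G \<Longrightarrow> generate G (A - {\<one>}) = generate G A"
  using mono_generate[of "A - {\<one>}" A] generate_subgroup_incl[of A "generate G (A - {\<one>})"]
    generate_is_subgroup[of "A - {\<one>}"] generate.one[of G "A - {\<one>}"] generate.incl[of _ "A - {\<one>}" G]
  by blast

lemma word_len_le:
  "set xs \<subseteq> S \<union> (\<lambda>s. inv s) ` S \<Longrightarrow> lprod G xs = x \<Longrightarrow> word_len G S x \<le> length xs"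
  unfolding word_len_def by (rule Least_le) blast

lemma word_len_obtain:
  assumes "S \<subseteq> carrier G" "x \<in> generate G S"
  obtains xs where "length xs = word_len G S x" "set xs \<subseteq> S \<union> (\<lambda>s. inv s) ` S" "lprod G xs = x"
proof -
  have "\<exists>xs. set xs \<subseteq> S \<union> (\<lambda>s. inv s) ` S \<and> lprod G xs = x"
    using assms(2)
  proof (induction rule: generate.induct)
    case one
    show ?case by (auto intro: exI[of _ "[]"])
  next
    case (incl h)
    with assms(1) show ?case by (auto intro!: exI[of _ "[h]"])
  next
    case (inv h)
    with assms(1) show ?case by (auto intro!: exI[of _ "[inv h]"])
  next
    case (eng h1 h2)
    then obtain xs ys where "set xs \<subseteq> S \<union> (\<lambda>s. inv s) ` S" "lprod G xs = h1"
      "set ys \<subseteq> S \<union> (\<lambda>s. inv s) ` S" "lprod G ys = h2"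
      by blast
    moreover have "S \<union> (\<lambda>s. inv s) ` S \<subseteq> carrier G"
      using assms(1) by auto
    ultimately show ?case
      by (intro exI[of _ "xs @ ys"]) (auto simp: lprod_append[OF subset_trans subset_trans])
  qed
  then have "\<exists>n xs. length xs = n \<and> set xs \<subseteq> S \<union> (\<lambda>s. inv s) ` S \<and> lprod G xs = x"
    by blast
  then have "\<exists>xs. length xs = word_len G S x \<and> set xs \<subseteq> S \<union> (\<lambda>s. inv s) ` S \<and> lprod G xs = x"
    unfolding word_len_def by (rule LeastI_ex)
  with that show ?thesis by blast
qed

lemma word_len_one: "word_len G S \<one> = 0"
  using word_len_le[of "[]" S \<one>] by simp

lemma word_len_gen_le: "s \<in> S \<Longrightarrow> S \<subseteq> carrier G \<Longrightarrow> word_len G S s \<le> 1"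
  using word_len_le[of "[s]" S s] by auto

lemma word_len_inv_gen_le: "s \<in> S \<Longrightarrow> S \<subseteq> carrier G \<Longrightarrow> word_len G S (inv s) \<le> 1"
  using word_len_le[of "[inv s]" S "inv s"] by auto

lemma word_len_mult_le:
  assumes "S \<subseteq> carrier G" "x \<in> generate G S" "y \<in> generate G S"
  shows "word_len G S (x \<otimes> y) \<le> word_len G S x + word_len G S y"
proof -
  obtain xs ys where xs: "length xs = word_len G S x" "set xs \<subseteq> S \<union> (\<lambda>s. inv s) ` S" "lprod G xs = x"
    and ys: "length ys = word_len G S y" "set ys \<subseteq> S \<union> (\<lambda>s. inv s) ` S" "lprod G ys = y"
    using word_len_obtain[OF assms(1,2)] word_len_obtain[OF assms(1,3)] by metis
  have "S \<union> (\<lambda>s. inv s) ` S \<subseteq> carrier G"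
    using assms(1) by auto
  with xs ys have "lprod G (xs @ ys) = x \<otimes> y"
    by (auto simp: lprod_append[OF subset_trans subset_trans])
  then show ?thesis
    using word_len_le[of "xs @ ys" S] xs ys by simp
qed

lemma set_len_eqI:
  assumes "\<theta> \<in> C" "\<And>\<beta>. \<beta> \<in> C \<Longrightarrow> word_len G S \<theta> \<le> word_len G S \<beta>"
  shows "set_len G S C = word_len G S \<theta>"
  unfolding set_len_def using assms by (intro Least_equality) auto

end

section \<open>The prefix order of a positive monoid\<close>

locale positive_monoid = group G for G (structure) +
  fixes M :: "'a set"
  assumes M_subset: "M \<subseteq> carrier G"
    and one_in_M: "\<one> \<in> M"
    and M_mult_closed: "x \<in> M \<Longrightarrow> y \<in> M \<Longrightarrow> x \<otimes> y \<in> M"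
    and M_units: "x \<in> M \<Longrightarrow> inv x \<in> M \<Longrightarrow> x = \<one>"
begin

abbreviation prefix :: "'a \<Rightarrow> 'a \<Rightarrow> bool" (infix "\<preceq>" 50)
  where "x \<preceq> y \<equiv> leqL G M x y"

lemma M_carrier: "x \<in> M \<Longrightarrow> x \<in> carrier G"
  using M_subset by auto

lemma M_pow_closed: "x \<in> M \<Longrightarrow> x [^] (n::nat) \<in> M"
  by (induction n) (simp_all add: one_in_M M_mult_closed)

lemma leqL_refl: "x \<in> carrier G \<Longrightarrow> x \<preceq> x"
  by (simp add: leqL_def one_in_M)

lemma leqL_trans:
  assumes "x \<preceq> y" "y \<preceq> z" "x \<in> carrier G" "y \<in> carrier G" "z \<in> carrier G"
  shows "x \<preceq> z"
proof -
  have "(inv x \<otimes> y) \<otimes> (inv y \<otimes> z) \<in> M"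
    using assms(1,2) by (simp add: leqL_def M_mult_closed)
  also have "(inv x \<otimes> y) \<otimes> (inv y \<otimes> z) = inv x \<otimes> z"
    using assms(3-5) by (simp add: m_assoc[symmetric]) (simp add: m_assoc)
  finally show ?thesis
    by (simp add: leqL_def)
qed

lemma leqL_antisym:
  assumes "x \<preceq> y" "y \<preceq> x" "x \<in> carrier G" "y \<in> carrier G"
  shows "x = y"
proof -
  have "inv (inv x \<otimes> y) = inv y \<otimes> x"
    using assms(3,4) by (simp add: inv_mult_group)
  then have "inv x \<otimes> y = \<one>"
    using assms(1,2) M_units by (simp add: leqL_def)
  then show ?thesis
    using assms(3,4) by (simp add: inv_solve_left')
qed

lemma one_leqL_iff: "y \<in> carrier G \<Longrightarrow> \<one> \<preceq> y \<longleftrightarrow> y \<in> M"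
  by (simp add: leqL_def)

lemma leqL_one_imp_eq: "x \<in> M \<Longrightarrow> x \<preceq> \<one> \<Longrightarrow> x = \<one>"
  using M_units by (simp add: leqL_def M_carrier)

lemma leqL_mult_left_iff:
  "g \<in> carrier G \<Longrightarrow> x \<in> carrier G \<Longrightarrow> y \<in> carrier G \<Longrightarrow> g \<otimes> x \<preceq> g \<otimes> y \<longleftrightarrow> x \<preceq> y"
  by (simp add: leqL_def inv_mult_group m_assoc[symmetric]) (simp add: m_assoc)

lemma leqL_mult_right: "x \<in> carrier G \<Longrightarrow> y \<in> M \<Longrightarrow> x \<preceq> x \<otimes> y"
  by (simp add: leqL_def M_carrier m_assoc[symmetric])

lemma leqL_mult_right_iff:
  "g \<in> carrier G \<Longrightarrow> x \<in> carrier G \<Longrightarrow> y \<in> carrier G \<Longrightarrow>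
    x \<otimes> g \<preceq> y \<otimes> g \<longleftrightarrow> inv g \<otimes> (inv x \<otimes> y) \<otimes> g \<in> M"
  by (simp add: leqL_def inv_mult_group m_assoc)

lemma Div_iff: "s \<in> Div G M b \<longleftrightarrow> s \<in> M \<and> s \<preceq> b"
  by (simp add: Div_def DivL_def)

lemma Div_iff_right: "balanced G M b \<Longrightarrow> s \<in> Div G M b \<longleftrightarrow> s \<in> M \<and> b \<otimes> inv s \<in> M"
  by (simp add: balanced_def Div_def DivR_def leqR_def)

lemma Div_subset: "Div G M b \<subseteq> M"
  by (auto simp: Div_iff)

lemma Div_carrier: "Div G M b \<subseteq> carrier G"
  using Div_subset M_subset by blast

lemma balanced_in_M: "balanced G M b \<Longrightarrow> b \<in> M"
  by (simp add: balanced_def)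

lemma balanced_in_Div: "balanced G M b \<Longrightarrow> b \<in> Div G M b"
  by (simp add: Div_iff balanced_in_M leqL_refl M_carrier)

lemma balanced_Div_complements:
  assumes b: "balanced G M b" and s: "s \<in> Div G M b"
  shows "inv s \<otimes> b \<in> Div G M b" "b \<otimes> inv s \<in> Div G M b"
proof -
  have c: "b \<in> carrier G" "s \<in> carrier G"
    using b s balanced_in_M M_carrier Div_carrier by auto
  have M: "s \<in> M" "inv s \<otimes> b \<in> M" "b \<otimes> inv s \<in> M"
    using s Div_iff Div_iff_right[OF b] by (auto simp: leqL_def)
  have "b \<otimes> inv (inv s \<otimes> b) \<in> M"
    using c M by (simp add: inv_mult_group m_assoc)
  then show "inv s \<otimes> b \<in> Div G M b"
    using M Div_iff_right[OF b] by blast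
  have "b \<otimes> inv s \<preceq> b"
    using c M by (simp add: leqL_def inv_mult_group m_assoc)
  then show "b \<otimes> inv s \<in> Div G M b"
    using M Div_iff by blast
qed

lemma balanced_conj_Div:
  assumes b: "balanced G M b" and s: "s \<in> Div G M b"
  shows "inv b \<otimes> s \<otimes> b \<in> Div G M b" "b \<otimes> s \<otimes> inv b \<in> Div G M b"
proof -
  have c: "b \<in> carrier G" "s \<in> carrier G"
    using b s balanced_in_M M_carrier Div_carrier by auto
  have "inv (inv s \<otimes> b) \<otimes> b = inv b \<otimes> s \<otimes> b" "b \<otimes> inv (b \<otimes> inv s) = b \<otimes> s \<otimes> inv b"
    using c by (simp_all add: inv_mult_group m_assoc)
  then show "inv b \<otimes> s \<otimes> b \<in> Div G M b" "b \<otimes> s \<otimes> inv b \<in> Div G M b"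
    using balanced_Div_complements[OF b] s by metis+
qed

lemma balanced_pow_conj_monoid_gen:
  assumes b: "balanced G M b" and x: "x \<in> monoid_gen G (Div G M b)"
  shows "inv (b [^] (n::nat)) \<otimes> x \<otimes> b [^] n \<in> monoid_gen G (Div G M b)"
    and "b [^] n \<otimes> x \<otimes> inv (b [^] n) \<in> monoid_gen G (Div G M b)"
proof -
  have bc: "b \<in> carrier G"
    using b balanced_in_M M_carrier by blast
  have gen_carrier: "monoid_gen G (Div G M b) \<subseteq> carrier G"
    using monoid_gen_subset[OF Div_carrier] by blast
  have conj: "inv g \<otimes> y \<otimes> g \<in> monoid_gen G (Div G M b) \<and> g \<otimes> y \<otimes> inv g \<in> monoid_gen G (Div G M b)"
    if "g = b" "y \<in> monoid_gen G (Div G M b)" for g y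
    using that(2)
  proof (induction rule: monoid_gen_induct)
    case one
    show ?case using that(1) bc by (simp add: monoid_gen_one)
  next
    case (mult a y)
    have c: "a \<in> carrier G" "y \<in> carrier G"
      using mult.hyps Div_carrier gen_carrier by auto
    have "inv g \<otimes> (a \<otimes> y) \<otimes> g = (inv g \<otimes> a \<otimes> g) \<otimes> (inv g \<otimes> y \<otimes> g)"
      "g \<otimes> (a \<otimes> y) \<otimes> inv g = (g \<otimes> a \<otimes> inv g) \<otimes> (g \<otimes> y \<otimes> inv g)"
      using c bc that(1) by (simp_all add: m_assoc)
    moreover have "inv g \<otimes> a \<otimes> g \<in> monoid_gen G (Div G M b)" "g \<otimes> a \<otimes> inv g \<in> monoid_gen G (Div G M b)"
      using balanced_conj_Div[OF b mult.hyps(1)] monoid_gen_incl[OF Div_carrier] that(1) by auto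
    ultimately show ?case
      using mult.IH monoid_gen_mult[OF Div_carrier] by auto
  qed
  have "inv (b [^] n) \<otimes> x \<otimes> b [^] n \<in> monoid_gen G (Div G M b) \<and>
        b [^] n \<otimes> x \<otimes> inv (b [^] n) \<in> monoid_gen G (Div G M b)"
  proof (induction n)
    case 0
    show ?case
      using x gen_carrier by auto
  next
    case (Suc n)
    have xc: "x \<in> carrier G"
      using x gen_carrier by blast
    have "inv (b [^] Suc n) \<otimes> x \<otimes> b [^] Suc n = inv b \<otimes> (inv (b [^] n) \<otimes> x \<otimes> b [^] n) \<otimes> b"
      using bc xc by (simp add: m_assoc inv_mult_group)
    moreover have "b [^] Suc n \<otimes> x \<otimes> inv (b [^] Suc n) = b \<otimes> (b [^] n \<otimes> x \<otimes> inv (b [^] n)) \<otimes> inv b"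
      unfolding nat_pow_Suc2[OF bc] using bc xc by (simp add: m_assoc inv_mult_group)
    ultimately show ?case
      using Suc conj by auto
  qed
  then show "inv (b [^] n) \<otimes> x \<otimes> b [^] n \<in> monoid_gen G (Div G M b)"
    "b [^] n \<otimes> x \<otimes> inv (b [^] n) \<in> monoid_gen G (Div G M b)"
    by auto
qed

lemma balanced_Div_mult_pow_leqL:
  assumes b: "balanced G M b" and s: "s \<in> Div G M b"
  shows "s \<otimes> b [^] n \<preceq> b [^] Suc n"
proof -
  have c: "b \<in> carrier G" "s \<in> carrier G"
    using b s balanced_in_M M_carrier Div_carrier by auto
  have "inv s \<otimes> b \<in> monoid_gen G (Div G M b)"
    using balanced_Div_complements(1)[OF b s] monoid_gen_incl[OF Div_carrier] by blast
  then have "inv (b [^] n) \<otimes> (inv s \<otimes> b) \<otimes> b [^] n \<in> M"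
    using balanced_pow_conj_monoid_gen(1)[OF b] monoid_gen_subset[OF Div_subset one_in_M M_mult_closed]
    by blast
  then show ?thesis
    unfolding nat_pow_Suc2[OF c(1)] using c by (simp add: leqL_def inv_mult_group m_assoc)
qed

lemma balanced_monoid_gen_leqL_pow:
  assumes b: "balanced G M b" and x: "x \<in> monoid_gen G (Div G M b)"
  shows "\<exists>n::nat. x \<preceq> b [^] n"
  using x
proof (induction rule: monoid_gen_induct)
  case one
  show ?case
    using leqL_refl[of \<one>] by (auto intro: exI[of _ 0])
next
  case (mult a y)
  then obtain n :: nat where n: "y \<preceq> b [^] n"
    by blast
  have c: "a \<in> carrier G" "y \<in> carrier G" "b \<in> carrier G"
    using mult.hyps b Div_carrier monoid_gen_subset[OF Div_carrier] balanced_in_M M_carrier by auto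
  have "a \<otimes> y \<preceq> a \<otimes> b [^] n"
    using n c by (simp add: leqL_mult_left_iff)
  then have "a \<otimes> y \<preceq> b [^] Suc n"
    using leqL_trans balanced_Div_mult_pow_leqL[OF b mult.hyps(1)] c by blast
  then show ?case ..
qed

lemma monoid_gen_nonunit_prefix:
  assumes "A \<subseteq> M" "x \<in> monoid_gen G A" "x \<noteq> \<one>"
  shows "\<exists>a\<in>A. a \<noteq> \<one> \<and> a \<preceq> x"
  using assms(2,3)
proof (induction rule: monoid_gen_induct)
  case (mult a y)
  have "y \<in> M"
    using mult.hyps(2) monoid_gen_subset[OF assms(1) one_in_M M_mult_closed] by blast
  show ?case
  proof (cases "a = \<one>")
    case True
    with mult show ?thesis
      using \<open>y \<in> M\<close> M_carrier by simp
  next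
    case False
    moreover have "a \<preceq> a \<otimes> y"
      using leqL_mult_right \<open>y \<in> M\<close> mult.hyps(1) assms(1) M_carrier by blast
    ultimately show ?thesis
      using mult.hyps(1) by blast
  qed
qed simp

lemma is_glbL_unique:
  assumes "is_glbL G M a b m" "is_glbL G M a b m'"
  shows "m = m'"
proof -
  have "m \<preceq> m'" "m' \<preceq> m" "m \<in> carrier G" "m' \<in> carrier G"
    using assms unfolding is_glbL_def by blast+
  then show ?thesis
    by (rule leqL_antisym)
qed

lemma meetL_eqI: "is_glbL G M a b m \<Longrightarrow> meetL G M a b = m"
  unfolding meetL_def using is_glbL_unique by blast

end

section \<open>Garside groups\<close>

locale garside_group = positive_monoid +
  fixes \<Delta> :: 'a
  assumes balanced_Delta: "balanced G M \<Delta>"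
    and M_generated: "monoid_gen G (Div G M \<Delta>) = M"
    and G_generated: "generate G (Div G M \<Delta>) = carrier G"
    and lattice: "latticeL G M"
begin

abbreviation simples :: "'a set"
  where "simples \<equiv> Div G M \<Delta> - {\<one>}"

lemma Delta_in_M: "\<Delta> \<in> M"
  using balanced_Delta by (rule balanced_in_M)

lemma Delta_carrier [simp]: "\<Delta> \<in> carrier G"
  using Delta_in_M M_carrier by blast

lemma M_Delta_pow_conj:
  assumes "x \<in> M"
  shows "inv (\<Delta> [^] (n::nat)) \<otimes> x \<otimes> \<Delta> [^] n \<in> M" "\<Delta> [^] n \<otimes> x \<otimes> inv (\<Delta> [^] n) \<in> M"
  using balanced_pow_conj_monoid_gen[OF balanced_Delta, of x n] assms M_generated by simp_all

lemma leqL_mult_Delta_pow: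
  "x \<preceq> y \<Longrightarrow> x \<in> carrier G \<Longrightarrow> y \<in> carrier G \<Longrightarrow> x \<otimes> \<Delta> [^] (n::nat) \<preceq> y \<otimes> \<Delta> [^] n"
  unfolding leqL_def[of G M x y] by (simp add: leqL_mult_right_iff M_Delta_pow_conj(1))

lemma leqL_mult_inv_Delta_pow:
  "x \<preceq> y \<Longrightarrow> x \<in> carrier G \<Longrightarrow> y \<in> carrier G \<Longrightarrow> x \<otimes> inv (\<Delta> [^] (n::nat)) \<preceq> y \<otimes> inv (\<Delta> [^] n)"
  unfolding leqL_def[of G M x y] by (simp add: leqL_mult_right_iff M_Delta_pow_conj(2))

lemma Delta_pow_leqL_mult: "y \<in> M \<Longrightarrow> \<Delta> [^] (n::nat) \<preceq> y \<otimes> \<Delta> [^] n"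
  using M_Delta_pow_conj(1)[of y n] M_carrier by (simp add: leqL_def m_assoc)

lemma exists_leqL_Delta_pow: "a \<in> M \<Longrightarrow> \<exists>r::nat. a \<preceq> \<Delta> [^] r"
  using balanced_monoid_gen_leqL_pow[OF balanced_Delta] M_generated by simp

lemma lubL_exists: "x \<in> carrier G \<Longrightarrow> y \<in> carrier G \<Longrightarrow> \<exists>j. is_lubL G M x y j"
  using lattice by (simp add: latticeL_def)

lemma glbL_exists: "x \<in> carrier G \<Longrightarrow> y \<in> carrier G \<Longrightarrow> \<exists>m. is_glbL G M x y m"
  using lattice by (simp add: latticeL_def)

lemma N_reduced_coprime:
  assumes "N_reduced G M \<delta> a" "\<delta> \<in> carrier G" "c \<in> M" "c \<preceq> a" "c \<preceq> \<delta>"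
  shows "c = \<one>"
proof -
  have a: "a \<in> M" and meet: "meetL G M a \<delta> = \<one>"
    using assms(1) by (auto simp: N_reduced_def)
  obtain m where "is_glbL G M a \<delta> m"
    using glbL_exists[of a \<delta>] a assms(2) M_carrier by blast
  then have "is_glbL G M a \<delta> \<one>"
    using meet meetL_eqI by metis
  then have "c \<preceq> \<one>"
    using assms(3-5) M_carrier by (auto simp: is_glbL_def)
  then show ?thesis
    using leqL_one_imp_eq assms(3) by blast
qed

lemma leqL_Delta_pow_or_common_prefix:
  assumes z: "z \<in> M" and w: "w \<in> M" and le: "z \<preceq> w \<otimes> \<Delta> [^] (m::nat)"
  shows "z \<preceq> \<Delta> [^] m \<or> (\<exists>\<rho>\<in>M. \<rho> \<noteq> \<one> \<and> \<rho> \<preceq> z \<and> \<rho> \<preceq> w)"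
proof -
  have c: "z \<in> carrier G" "w \<in> carrier G"
    using z w M_carrier by auto
  obtain J where "is_lubL G M z (\<Delta> [^] m) J"
    using lubL_exists[of z "\<Delta> [^] m"] c by auto
  then have Jc: "J \<in> carrier G" and "z \<preceq> J" "\<Delta> [^] m \<preceq> J"
    and J_least: "\<And>y. y \<in> carrier G \<Longrightarrow> z \<preceq> y \<Longrightarrow> \<Delta> [^] m \<preceq> y \<Longrightarrow> J \<preceq> y"
    by (auto simp: is_lubL_def)
  define \<rho> where "\<rho> = J \<otimes> inv (\<Delta> [^] m)"
  have "\<Delta> [^] m \<otimes> (inv (\<Delta> [^] m) \<otimes> J) \<otimes> inv (\<Delta> [^] m) \<in> M"
    using M_Delta_pow_conj(2) \<open>\<Delta> [^] m \<preceq> J\<close> by (simp add: leqL_def)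
  then have "\<rho> \<in> M"
    using Jc by (simp add: \<rho>_def m_assoc)
  have "J \<preceq> z \<otimes> \<Delta> [^] m"
    using J_least leqL_mult_right[OF c(1) M_pow_closed[OF Delta_in_M]] Delta_pow_leqL_mult[OF z] c by simp
  then have "\<rho> \<preceq> z"
    using leqL_mult_inv_Delta_pow[of J "z \<otimes> \<Delta> [^] m" m] Jc c by (simp add: \<rho>_def m_assoc)
  have "J \<preceq> w \<otimes> \<Delta> [^] m"
    using J_least le Delta_pow_leqL_mult[OF w] c by simp
  then have "\<rho> \<preceq> w"
    using leqL_mult_inv_Delta_pow[of J "w \<otimes> \<Delta> [^] m" m] Jc c by (simp add: \<rho>_def m_assoc)
  show ?thesis
  proof (cases "\<rho> = \<one>")
    case True
    then have "J = \<Delta> [^] m"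
      using Jc by (simp add: \<rho>_def inv_solve_right')
    then show ?thesis
      using \<open>z \<preceq> J\<close> by simp
  next
    case False
    then show ?thesis
      using \<open>\<rho> \<in> M\<close> \<open>\<rho> \<preceq> z\<close> \<open>\<rho> \<preceq> w\<close> by blast
  qed
qed

text \<open>Splitting off the left-greedy simple factor \<open>s = a \<and> \<Delta>\<close>.\<close>

lemma leqL_Delta_pow_Suc_split:
  assumes a: "a \<in> M" and le: "a \<preceq> \<Delta> [^] Suc m"
  obtains s a' where "s \<in> Div G M \<Delta>" "a' \<in> M" "a = s \<otimes> a'" "a' \<preceq> \<Delta> [^] m"
proof -
  have ac: "a \<in> carrier G"
    using a M_carrier by blast
  obtain s where "is_glbL G M a \<Delta> s"
    using glbL_exists[OF ac Delta_carrier] by blast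
  then have sc: "s \<in> carrier G" and "s \<preceq> a" "s \<preceq> \<Delta>"
    and s_greatest: "\<And>y. y \<in> carrier G \<Longrightarrow> y \<preceq> a \<Longrightarrow> y \<preceq> \<Delta> \<Longrightarrow> y \<preceq> s"
    by (auto simp: is_glbL_def)
  have "s \<in> M"
    using s_greatest[of \<one>] a Delta_in_M sc ac by (simp add: one_leqL_iff)
  then have s: "s \<in> Div G M \<Delta>"
    using \<open>s \<preceq> \<Delta>\<close> by (simp add: Div_iff)
  define a' where "a' = inv s \<otimes> a"
  have a': "a' \<in> M" "a = s \<otimes> a'"
    using \<open>s \<preceq> a\<close> sc ac by (simp_all add: a'_def leqL_def)
  have w: "inv s \<otimes> \<Delta> \<in> M"
    using \<open>s \<preceq> \<Delta>\<close> by (simp add: leqL_def)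
  have "a \<preceq> \<Delta> \<otimes> \<Delta> [^] m"
    using le by (simp only: nat_pow_Suc2[OF Delta_carrier])
  then have "inv s \<otimes> a \<preceq> inv s \<otimes> (\<Delta> \<otimes> \<Delta> [^] m)"
    using sc ac by (simp add: leqL_mult_left_iff)
  then have "a' \<preceq> (inv s \<otimes> \<Delta>) \<otimes> \<Delta> [^] m"
    using sc by (simp add: a'_def m_assoc)
  moreover have False if "\<rho> \<in> M" "\<rho> \<noteq> \<one>" "\<rho> \<preceq> a'" "\<rho> \<preceq> inv s \<otimes> \<Delta>" for \<rho>
  proof -
    have c: "\<rho> \<in> carrier G" "a' \<in> carrier G"
      using that(1) a' M_carrier by auto
    have "s \<otimes> \<rho> \<preceq> a"
      using leqL_mult_left_iff[of s \<rho> a'] that(3) a'(2) sc c by simp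
    moreover have "s \<otimes> \<rho> \<preceq> \<Delta>"
      using leqL_mult_left_iff[of s \<rho> "inv s \<otimes> \<Delta>"] that(4) sc c by simp
    ultimately have "s \<otimes> \<rho> \<preceq> s \<otimes> \<one>"
      using s_greatest sc c by simp
    then have "\<rho> = \<one>"
      using leqL_mult_left_iff[of s \<rho> \<one>] sc c leqL_one_imp_eq that(1) by simp
    with that(2) show False ..
  qed
  ultimately have "a' \<preceq> \<Delta> [^] m"
    using leqL_Delta_pow_or_common_prefix[OF a'(1) w] by blast
  then show ?thesis
    using that s a' by blast
qed

definition Delta_sup :: "'a \<Rightarrow> nat"
  where "Delta_sup a = (LEAST r. a \<preceq> \<Delta> [^] r)"

lemma leqL_Delta_pow_Delta_sup: "a \<in> M \<Longrightarrow> a \<preceq> \<Delta> [^] Delta_sup a"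
  unfolding Delta_sup_def using exists_leqL_Delta_pow by (rule LeastI_ex)

lemma Delta_sup_le: "a \<preceq> \<Delta> [^] r \<Longrightarrow> Delta_sup a \<le> r"
  unfolding Delta_sup_def by (rule Least_le)

lemma generate_simples: "generate G simples = carrier G"
  using generate_Diff_one[OF Div_carrier] G_generated by simp

lemma word_len_simples_mult_le:
  "x \<in> carrier G \<Longrightarrow> y \<in> carrier G \<Longrightarrow>
    word_len G simples (x \<otimes> y) \<le> word_len G simples x + word_len G simples y"
  using word_len_mult_le[of simples x y] Div_carrier generate_simples by blast

lemma word_len_Div_le:
  assumes "s \<in> Div G M \<Delta>"
  shows "word_len G simples s \<le> 1" "word_len G simples (inv s) \<le> 1"
proof -
  have "simples \<subseteq> carrier G"
    using Div_carrier by blast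
  then show "word_len G simples s \<le> 1" "word_len G simples (inv s) \<le> 1"
    using assms word_len_gen_le word_len_inv_gen_le word_len_one
    by (cases "s = \<one>"; simp)+
qed

lemma word_len_le_of_leqL_Delta_pow:
  "a \<in> M \<Longrightarrow> a \<preceq> \<Delta> [^] (r::nat) \<Longrightarrow> word_len G simples a \<le> r"
proof (induction r arbitrary: a)
  case 0
  then have "a = \<one>"
    using leqL_one_imp_eq by simp
  then show ?case
    by (simp add: word_len_one)
next
  case (Suc r)
  then obtain s a' where "s \<in> Div G M \<Delta>" "a' \<in> M" "a = s \<otimes> a'" "a' \<preceq> \<Delta> [^] r"
    by (blast elim: leqL_Delta_pow_Suc_split)
  then show ?case
    using word_len_simples_mult_le[of s a'] word_len_Div_le(1) Suc.IH Div_carrier M_carrier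
    by fastforce
qed

lemma word_len_mult_inv_Delta_pow_le:
  "a \<in> M \<Longrightarrow> a \<preceq> \<Delta> [^] (r::nat) \<Longrightarrow> word_len G simples (a \<otimes> inv (\<Delta> [^] (q::nat))) \<le> max r q"
proof (induction q arbitrary: a r)
  case 0
  then show ?case
    using word_len_le_of_leqL_Delta_pow M_carrier by fastforce
next
  case (Suc q)
  show ?case
  proof (cases r)
    case 0
    then have "a = \<one>"
      using Suc.prems leqL_one_imp_eq by simp
    then have "a \<otimes> inv (\<Delta> [^] Suc q) = inv \<Delta> \<otimes> (\<one> \<otimes> inv (\<Delta> [^] q))"
      by (simp add: inv_mult_group)
    moreover have "word_len G simples (\<one> \<otimes> inv (\<Delta> [^] q)) \<le> q"
      using Suc.IH[of \<one> 0] one_in_M leqL_refl by simp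
    ultimately show ?thesis
      using word_len_simples_mult_le[of "inv \<Delta>" "\<one> \<otimes> inv (\<Delta> [^] q)"]
        word_len_Div_le(2)[OF balanced_in_Div[OF balanced_Delta]] by simp
  next
    case (Suc r')
    with Suc.prems obtain s a' where s: "s \<in> Div G M \<Delta>" and a': "a' \<in> M" "a = s \<otimes> a'" "a' \<preceq> \<Delta> [^] r'"
      by (blast elim: leqL_Delta_pow_Suc_split)
    have c: "s \<in> carrier G" "a' \<in> carrier G"
      using s a' Div_carrier M_carrier by auto
    text \<open>Move one \<open>\<Delta>\<^sup>-\<^sup>1\<close> across \<open>a'\<close>: \<open>s a' \<Delta>\<^sup>-\<^sup>1 = (\<Delta> s\<^sup>-\<^sup>1)\<^sup>-\<^sup>1 (\<Delta> a' \<Delta>\<^sup>-\<^sup>1)\<close>.\<close>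
    define a'' where "a'' = \<Delta> \<otimes> a' \<otimes> inv \<Delta>"
    have "a'' \<in> M"
      using M_Delta_pow_conj(2)[OF a'(1), of 1] by (simp add: a''_def)
    have "\<Delta> \<otimes> (inv a' \<otimes> \<Delta> [^] r') \<otimes> inv \<Delta> \<in> M"
      using M_Delta_pow_conj(2)[of _ 1] a'(3) by (simp add: leqL_def)
    moreover have "inv a'' \<otimes> \<Delta> [^] r' = \<Delta> \<otimes> (inv a' \<otimes> \<Delta> [^] r') \<otimes> inv \<Delta>"
      using c inv_mult_nat_pow_comm[OF Delta_carrier] by (simp add: a''_def inv_mult_group m_assoc)
    ultimately have "a'' \<preceq> \<Delta> [^] r'"
      by (simp add: leqL_def)
    then have "word_len G simples (a'' \<otimes> inv (\<Delta> [^] q)) \<le> max r' q"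
      using Suc.IH \<open>a'' \<in> M\<close> by blast
    moreover have "a \<otimes> inv (\<Delta> [^] Suc q) = inv (\<Delta> \<otimes> inv s) \<otimes> (a'' \<otimes> inv (\<Delta> [^] q))"
      using c a'(2) by (simp add: a''_def inv_mult_group m_assoc)
    ultimately show ?thesis
      using word_len_simples_mult_le[of "inv (\<Delta> \<otimes> inv s)" "a'' \<otimes> inv (\<Delta> [^] q)"]
        word_len_Div_le(2)[OF balanced_Div_complements(2)[OF balanced_Delta s]] \<open>a'' \<in> M\<close> M_carrier c Suc
      by simp
  qed
qed

lemma Div_mult_between_Delta_pows:
  assumes s: "s \<in> Div G M \<Delta>" and P: "P \<in> carrier G" "P \<preceq> \<Delta> [^] (k::nat)" "inv (\<Delta> [^] (l::nat)) \<preceq> P"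
  shows "s \<otimes> P \<preceq> \<Delta> [^] Suc k" "inv (\<Delta> [^] l) \<preceq> s \<otimes> P"
proof -
  have c: "s \<in> carrier G" "s \<in> M"
    using s Div_carrier Div_subset by auto
  have "s \<otimes> P \<preceq> s \<otimes> \<Delta> [^] k"
    using P c by (simp add: leqL_mult_left_iff)
  then show "s \<otimes> P \<preceq> \<Delta> [^] Suc k"
    by (rule leqL_trans[OF _ balanced_Div_mult_pow_leqL[OF balanced_Delta s]]) (use c P in auto)
  have "inv (\<Delta> [^] l) \<preceq> s \<otimes> inv (\<Delta> [^] l)"
    using M_Delta_pow_conj(2)[OF c(2), of l] c by (simp add: leqL_def m_assoc)
  moreover have "s \<otimes> inv (\<Delta> [^] l) \<preceq> s \<otimes> P"
    using P c by (simp add: leqL_mult_left_iff)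
  ultimately show "inv (\<Delta> [^] l) \<preceq> s \<otimes> P"
    by (rule leqL_trans) (use c P in auto)
qed

lemma inv_Div_mult_between_Delta_pows:
  assumes s: "s \<in> Div G M \<Delta>" and P: "P \<in> carrier G" "P \<preceq> \<Delta> [^] (k::nat)" "inv (\<Delta> [^] (l::nat)) \<preceq> P"
  shows "inv s \<otimes> P \<preceq> \<Delta> [^] k" "inv (\<Delta> [^] Suc l) \<preceq> inv s \<otimes> P"
proof -
  have c: "s \<in> carrier G" "s \<in> M"
    using s Div_carrier Div_subset by auto
  have "inv s \<otimes> P \<preceq> inv s \<otimes> \<Delta> [^] k"
    using P c by (simp add: leqL_mult_left_iff)
  moreover have "inv s \<otimes> \<Delta> [^] k \<preceq> \<Delta> [^] k"
    using M_Delta_pow_conj(1)[OF c(2), of k] c by (simp add: leqL_def inv_mult_group m_assoc)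
  ultimately show "inv s \<otimes> P \<preceq> \<Delta> [^] k"
    by (rule leqL_trans) (use c P in auto)
  have "\<Delta> \<otimes> inv s \<in> M"
    using balanced_Div_complements(2)[OF balanced_Delta s] Div_subset by blast
  then have "\<Delta> [^] l \<otimes> (\<Delta> \<otimes> inv s) \<otimes> inv (\<Delta> [^] l) \<in> M"
    by (rule M_Delta_pow_conj(2))
  then have "inv (\<Delta> [^] Suc l) \<preceq> inv s \<otimes> inv (\<Delta> [^] l)"
    using c by (simp add: leqL_def m_assoc)
  moreover have "inv s \<otimes> inv (\<Delta> [^] l) \<preceq> inv s \<otimes> P"
    using P c by (simp add: leqL_mult_left_iff)
  ultimately show "inv (\<Delta> [^] Suc l) \<preceq> inv s \<otimes> P"
    by (rule leqL_trans) (use c P in auto)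
qed

lemma word_len_between_Delta_pows:
  assumes "x \<in> carrier G"
  obtains k l :: nat
  where "k + l = word_len G simples x" "x \<preceq> \<Delta> [^] k" "inv (\<Delta> [^] l) \<preceq> x"
proof -
  have letters: "simples \<union> (\<lambda>s. inv s) ` simples \<subseteq> carrier G"
    using Div_carrier by auto
  have bounds: "\<exists>k l::nat. k + l = length xs \<and> lprod G xs \<preceq> \<Delta> [^] k \<and> inv (\<Delta> [^] l) \<preceq> lprod G xs"
    if "set xs \<subseteq> simples \<union> (\<lambda>s. inv s) ` simples" for xs
    using that
  proof (induction xs)
    case Nil
    show ?case
      using leqL_refl[of \<one>] by (intro exI[of _ 0]) simp
  next
    case (Cons y xs)
    have "set xs \<subseteq> simples \<union> (\<lambda>s. inv s) ` simples"
      using Cons.prems by simp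
    then obtain k l :: nat where kl: "k + l = length xs" "lprod G xs \<preceq> \<Delta> [^] k" "inv (\<Delta> [^] l) \<preceq> lprod G xs"
      using Cons.IH by blast
    have P: "lprod G xs \<in> carrier G"
      using Cons.prems letters by (intro lprod_closed) auto
    consider "y \<in> Div G M \<Delta>" | s where "s \<in> Div G M \<Delta>" "y = inv s"
      using Cons.prems by auto
    then show ?case
    proof cases
      case 1
      then show ?thesis
        using Div_mult_between_Delta_pows[OF 1 P kl(2,3)] kl(1) by (intro exI[of _ "Suc k"] exI[of _ l]) simp
    next
      case 2
      then show ?thesis
        using inv_Div_mult_between_Delta_pows[OF 2(1) P kl(2,3)] kl(1) by (intro exI[of _ k] exI[of _ "Suc l"]) simp
    qed
  qed
  obtain xs where xs: "length xs = word_len G simples x" "set xs \<subseteq> simples \<union> (\<lambda>s. inv s) ` simples" "lprod G xs = x"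
    using word_len_obtain[of simples x] Div_carrier generate_simples assms by blast
  show ?thesis
    using bounds[OF xs(2)] unfolding xs(1,3) using that by blast
qed

end

section \<open>Parabolic subgroups\<close>

locale parabolic_subgroup = garside_group +
  fixes \<delta> :: 'a and H N :: "'a set"
  assumes balanced_delta: "balanced G M \<delta>"
    and H_def: "H = generate G (Div G M \<delta>)"
    and N_def: "N = monoid_gen G (Div G M \<delta>)"
    and Div_delta_eq: "Div G M \<delta> = Div G M \<Delta> \<inter> N"
begin

abbreviation \<omega> :: 'a
  where "\<omega> \<equiv> inv \<delta> \<otimes> \<Delta>"

lemma delta_in_M: "\<delta> \<in> M"
  using balanced_delta by (rule balanced_in_M)

lemma delta_carrier [simp]: "\<delta> \<in> carrier G"
  using delta_in_M M_carrier by blast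

lemma N_subset_M: "N \<subseteq> M"
  unfolding N_def using monoid_gen_subset[OF Div_subset one_in_M M_mult_closed] .

lemma Div_delta_subset_N: "Div G M \<delta> \<subseteq> N"
  unfolding N_def using monoid_gen_incl[OF Div_carrier] by blast

lemma N_mult_closed: "x \<in> N \<Longrightarrow> y \<in> N \<Longrightarrow> x \<otimes> y \<in> N"
  unfolding N_def by (rule monoid_gen_mult[OF Div_carrier])

lemma delta_in_N: "\<delta> \<in> N"
  using balanced_in_Div[OF balanced_delta] Div_delta_subset_N by blast

lemma omega_in_M: "\<omega> \<in> M"
  using balanced_in_Div[OF balanced_delta] Div_delta_eq by (simp add: Div_iff leqL_def)

lemma delta_leqL_Delta: "\<delta> \<preceq> \<Delta>"
  using omega_in_M by (simp add: leqL_def)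

lemma omega_leqL_Delta: "\<omega> \<preceq> \<Delta>"
  using M_Delta_pow_conj(1)[OF delta_in_M, of 1] by (simp add: leqL_def inv_mult_group m_assoc)

lemma H_carrier: "H \<subseteq> carrier G"
  unfolding H_def using generate_incl[OF Div_carrier] .

lemma H_one: "\<one> \<in> H"
  unfolding H_def by (rule generate.one)

lemma H_inv: "h \<in> H \<Longrightarrow> inv h \<in> H"
  unfolding H_def by (rule generate_m_inv_closed[OF Div_carrier])

lemma H_elem_inv_delta_pow_mult: "g \<in> H \<Longrightarrow> \<exists>(j::nat) w. w \<in> N \<and> g = inv (\<delta> [^] j) \<otimes> w"
  unfolding H_def
proof (induction rule: generate.induct)
  case one
  show ?case
    using monoid_gen_one N_def by (intro exI[of _ 0] exI[of _ \<one>]) auto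
next
  case (incl h)
  then show ?case
    using Div_delta_subset_N Div_carrier[of \<delta>] by (intro exI[of _ 0] exI[of _ h]) auto
next
  case (inv h)
  have hc: "h \<in> carrier G"
    using inv Div_carrier by blast
  have "\<delta> \<otimes> inv h \<in> N"
    using balanced_Div_complements(2)[OF balanced_delta inv] Div_delta_subset_N by blast
  then show ?case
    using hc by (intro exI[of _ 1] exI[of _ "\<delta> \<otimes> inv h"]) (simp add: inv_mult_group)
next
  case (eng h1 h2)
  then obtain i j :: nat and w v where w: "w \<in> N" "h1 = inv (\<delta> [^] i) \<otimes> w"
    and v: "v \<in> N" "h2 = inv (\<delta> [^] j) \<otimes> v"
    by blast
  have c: "w \<in> carrier G" "v \<in> carrier G"
    using w v N_subset_M M_carrier by auto
  have "\<delta> [^] j \<otimes> w \<otimes> inv (\<delta> [^] j) \<in> N"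
    using balanced_pow_conj_monoid_gen(2)[OF balanced_delta] w N_def by simp
  then have "(\<delta> [^] j \<otimes> w \<otimes> inv (\<delta> [^] j)) \<otimes> v \<in> N"
    using v N_mult_closed by blast
  moreover have "h1 \<otimes> h2 = inv (\<delta> [^] (j + i)) \<otimes> ((\<delta> [^] j \<otimes> w \<otimes> inv (\<delta> [^] j)) \<otimes> v)"
    using c w v by (simp add: nat_pow_mult[symmetric] inv_mult_group m_assoc)
  ultimately show ?case
    by blast
qed

lemma H_elem_mult_inv_delta_pow: "g \<in> H \<Longrightarrow> \<exists>(j::nat) w. w \<in> N \<and> g = w \<otimes> inv (\<delta> [^] j)"
proof -
  assume "g \<in> H"
  then obtain j :: nat and w where w: "w \<in> N" "g = inv (\<delta> [^] j) \<otimes> w"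
    using H_elem_inv_delta_pow_mult by blast
  have "inv (\<delta> [^] j) \<otimes> w \<otimes> \<delta> [^] j \<in> N"
    using balanced_pow_conj_monoid_gen(1)[OF balanced_delta] w N_def by simp
  moreover have "g = (inv (\<delta> [^] j) \<otimes> w \<otimes> \<delta> [^] j) \<otimes> inv (\<delta> [^] j)"
    using w N_subset_M M_carrier by (auto simp: m_assoc)
  ultimately show ?thesis
    by blast
qed

lemma exists_leqL_delta_pow: "w \<in> N \<Longrightarrow> \<exists>k::nat. w \<preceq> \<delta> [^] k"
  unfolding N_def by (rule balanced_monoid_gen_leqL_pow[OF balanced_delta])

lemma delta_omega_coprime:
  assumes t: "t \<in> M" "t \<preceq> \<delta>" "t \<preceq> \<omega>"
  shows "t = \<one>"
proof -
  have tc: "t \<in> carrier G"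
    using t M_carrier by blast
  have "t \<in> N"
    using t Div_delta_subset_N by (auto simp: Div_iff)
  then have "\<delta> \<otimes> t \<in> N"
    using delta_in_N N_mult_closed by blast
  moreover have "\<delta> \<otimes> t \<preceq> \<Delta>"
    using t(3) tc by (simp add: leqL_def inv_mult_group m_assoc)
  ultimately have "\<delta> \<otimes> t \<in> Div G M \<delta>"
    using Div_delta_eq N_subset_M by (auto simp: Div_iff)
  then have "\<delta> \<otimes> t \<preceq> \<delta>"
    by (simp add: Div_iff)
  then have "t \<preceq> \<one>"
    using leqL_mult_left_iff[of \<delta> t \<one>] tc by simp
  then show ?thesis
    using leqL_one_imp_eq t(1) by blast
qed

lemma Delta_leqL_of_omega_delta_leqL:
  assumes z: "z \<in> carrier G" "\<omega> \<preceq> z" "\<delta> \<preceq> z"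
  shows "\<Delta> \<preceq> z"
proof -
  obtain J where "is_lubL G M \<omega> \<delta> J"
    using lubL_exists[of \<omega> \<delta>] by auto
  then have Jc: "J \<in> carrier G" and J: "\<omega> \<preceq> J" "\<delta> \<preceq> J"
    and J_least: "\<And>y. y \<in> carrier G \<Longrightarrow> \<omega> \<preceq> y \<Longrightarrow> \<delta> \<preceq> y \<Longrightarrow> J \<preceq> y"
    by (auto simp: is_lubL_def)
  text \<open>Both \<open>t = \<Delta> J\<^sup>-\<^sup>1\<close> and \<open>t \<delta>\<close> are simple and lie in \<open>N\<close>, so both divide \<open>\<delta>\<close>;
    this forces \<open>t\<^sup>-\<^sup>1 \<in> M\<close>, i.e. \<open>J = \<Delta>\<close>.\<close>
  define t where "t = \<Delta> \<otimes> inv J"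
  have tc: "t \<in> carrier G"
    using Jc by (simp add: t_def)
  have "\<Delta> \<otimes> (inv J \<otimes> \<Delta>) \<otimes> inv \<Delta> \<in> M"
    using M_Delta_pow_conj(2)[of _ 1] J_least[OF Delta_carrier omega_leqL_Delta delta_leqL_Delta]
    by (simp add: leqL_def)
  then have tM: "t \<in> M"
    using Jc by (simp add: t_def m_assoc)
  have "\<Delta> \<otimes> (inv \<omega> \<otimes> J) \<otimes> inv \<Delta> \<in> M"
    using M_Delta_pow_conj(2)[of _ 1] J(1) by (simp add: leqL_def)
  then have "\<delta> \<otimes> inv t \<in> M"
    using Jc by (simp add: t_def inv_mult_group m_assoc)
  then have "t \<in> N"
    using Div_iff_right[OF balanced_delta] tM Div_delta_subset_N by blast
  then have tdN: "t \<otimes> \<delta> \<in> N"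
    using N_mult_closed delta_in_N by blast
  have "\<Delta> \<otimes> (inv \<delta> \<otimes> J) \<otimes> inv \<Delta> \<in> M"
    using M_Delta_pow_conj(2)[of _ 1] J(2) by (simp add: leqL_def)
  then have "\<Delta> \<otimes> inv (t \<otimes> \<delta>) \<in> M"
    using Jc by (simp add: t_def inv_mult_group m_assoc)
  then have "t \<otimes> \<delta> \<in> Div G M \<Delta>"
    using Div_iff_right[OF balanced_Delta] tdN N_subset_M by blast
  then have "t \<otimes> \<delta> \<in> Div G M \<delta>"
    using Div_delta_eq tdN by blast
  then have "\<delta> \<otimes> inv (t \<otimes> \<delta>) \<in> M"
    using Div_iff_right[OF balanced_delta] by blast
  then have "inv t \<in> M"
    using tc by (simp add: inv_mult_group)
  then have "J = \<Delta>"
    using M_units[OF tM] Jc by (simp add: t_def inv_solve_right')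
  then show ?thesis
    using J_least[OF z] by simp
qed

lemma leqL_delta_of_leqL_delta_pow:
  "t \<in> M \<Longrightarrow> t \<preceq> \<delta> [^] Suc j \<Longrightarrow> t \<preceq> \<Delta> \<Longrightarrow> t \<preceq> \<delta>"
proof (induction j arbitrary: t)
  case (Suc j)
  have tc: "t \<in> carrier G"
    using Suc.prems M_carrier by blast
  obtain u where "is_lubL G M t \<delta> u"
    using lubL_exists[OF tc delta_carrier] by blast
  then have uc: "u \<in> carrier G" and u: "t \<preceq> u" "\<delta> \<preceq> u"
    and u_least: "\<And>y. y \<in> carrier G \<Longrightarrow> t \<preceq> y \<Longrightarrow> \<delta> \<preceq> y \<Longrightarrow> u \<preceq> y"
    by (auto simp: is_lubL_def)
  have pow: "\<delta> [^] Suc (Suc j) = \<delta> \<otimes> \<delta> [^] Suc j"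
    by (rule nat_pow_Suc2[OF delta_carrier])
  have "\<delta> \<preceq> \<delta> [^] Suc (Suc j)"
    unfolding pow by (rule leqL_mult_right[OF delta_carrier M_pow_closed[OF delta_in_M]])
  then have "u \<preceq> \<delta> [^] Suc (Suc j)"
    using Suc.prems by (intro u_least) simp_all
  then have u_pow: "u \<preceq> \<delta> \<otimes> \<delta> [^] Suc j"
    by (simp only: pow)
  have u_Delta: "u \<preceq> \<Delta>"
    using u_least Suc.prems delta_leqL_Delta by simp
  text \<open>The join \<open>u\<close> of \<open>t\<close> and \<open>\<delta>\<close> is \<open>\<delta>\<close> itself: \<open>e = \<delta>\<^sup>-\<^sup>1 u\<close> divides \<open>\<delta>\<close> by induction
    and divides \<open>\<omega>\<close>, and \<open>\<delta>\<close>, \<open>\<omega>\<close> are coprime.\<close>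
  define e where "e = inv \<delta> \<otimes> u"
  have ec: "e \<in> carrier G" and eM: "e \<in> M"
    using uc u(2) by (simp_all add: e_def leqL_def)
  have e_pow: "e \<preceq> \<delta> [^] Suc j"
    using leqL_mult_left_iff[of "inv \<delta>" u "\<delta> \<otimes> \<delta> [^] Suc j"] u_pow uc by (simp add: e_def)
  have e_omega: "e \<preceq> \<omega>"
    using leqL_mult_left_iff[of "inv \<delta>" u \<Delta>] u_Delta uc by (simp add: e_def)
  then have "e \<preceq> \<Delta>"
    using leqL_trans[OF _ omega_leqL_Delta] ec by simp
  then have "e = \<one>"
    using Suc.IH[OF eM e_pow] delta_omega_coprime eM e_omega by blast
  then have "u = \<delta>"
    using uc by (simp add: e_def inv_solve_left')
  then show ?case
    using u(1) by simp
qed simp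

lemma leqL_Delta_pow_of_H_mult:
  assumes h: "h \<in> H" and a: "N_reduced G M \<delta> a" and le: "h \<otimes> a \<preceq> \<Delta> [^] (m::nat)"
  shows "a \<preceq> \<Delta> [^] m"
proof -
  have aM: "a \<in> M"
    using a by (simp add: N_reduced_def)
  have c: "h \<in> carrier G" "a \<in> carrier G"
    using h H_carrier aM M_carrier by auto
  obtain j :: nat and w where w: "w \<in> N" "inv h = w \<otimes> inv (\<delta> [^] j)"
    using H_elem_mult_inv_delta_pow H_inv[OF h] by blast
  have wM: "w \<in> M" and wc: "w \<in> carrier G"
    using w N_subset_M M_carrier by auto
  have "a \<preceq> inv h \<otimes> \<Delta> [^] m"
    using leqL_mult_left_iff[of "inv h" "h \<otimes> a" "\<Delta> [^] m"] le c by simp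
  then have "a \<preceq> w \<otimes> (inv (\<delta> [^] j) \<otimes> \<Delta> [^] m)"
    using w(2) c wc by (simp add: m_assoc)
  moreover have "inv (\<delta> [^] j) \<otimes> \<Delta> [^] m \<preceq> \<Delta> [^] m"
    using M_Delta_pow_conj(1)[OF M_pow_closed[OF delta_in_M]] by (simp add: leqL_def inv_mult_group m_assoc)
  then have "w \<otimes> (inv (\<delta> [^] j) \<otimes> \<Delta> [^] m) \<preceq> w \<otimes> \<Delta> [^] m"
    using wc by (simp add: leqL_mult_left_iff)
  ultimately have "a \<preceq> w \<otimes> \<Delta> [^] m"
    by (rule leqL_trans) (use c wc in auto)
  moreover have False if \<rho>: "\<rho> \<in> M" "\<rho> \<noteq> \<one>" "\<rho> \<preceq> a" "\<rho> \<preceq> w" for \<rho>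
  proof -
    obtain s where s: "s \<in> Div G M \<Delta>" "s \<noteq> \<one>" "s \<preceq> \<rho>"
      using monoid_gen_nonunit_prefix[OF Div_subset] \<rho>(1,2) M_generated by blast
    have sc: "s \<in> carrier G" and \<rho>c: "\<rho> \<in> carrier G"
      using s(1) \<rho>(1) Div_carrier M_carrier by auto
    obtain k :: nat where "w \<preceq> \<delta> [^] k"
      using exists_leqL_delta_pow w(1) by blast
    moreover have "\<delta> [^] k \<preceq> \<delta> [^] Suc k"
      using leqL_mult_right[OF _ delta_in_M, of "\<delta> [^] k"] by simp
    ultimately have "s \<preceq> \<delta> [^] Suc k"
      using leqL_trans[OF leqL_trans[OF leqL_trans[OF s(3) \<rho>(4)]]] sc \<rho>c wc by simp
    then have "s \<preceq> \<delta>"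
      using leqL_delta_of_leqL_delta_pow s Div_iff by blast
    moreover have "s \<preceq> a"
      using leqL_trans[OF s(3) \<rho>(3)] sc \<rho>c c by simp
    ultimately show False
      using N_reduced_coprime[OF a delta_carrier] s Div_subset by blast
  qed
  ultimately show ?thesis
    using leqL_Delta_pow_or_common_prefix[OF aM wM] by blast
qed

lemma Delta_leqL_delta_mult_of_delta_pow_mult:
  "y \<in> M \<Longrightarrow> \<Delta> \<preceq> \<delta> [^] Suc j \<otimes> y \<Longrightarrow> \<Delta> \<preceq> \<delta> \<otimes> y"
proof (induction j)
  case (Suc j)
  have yc: "y \<in> carrier G"
    using Suc.prems M_carrier by blast
  define y' where "y' = \<delta> [^] j \<otimes> y"
  have y'M: "y' \<in> M" and y'c: "y' \<in> carrier G"
    using M_mult_closed[OF M_pow_closed[OF delta_in_M] Suc.prems(1)] M_carrier by (simp_all add: y'_def)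
  have eq: "\<delta> [^] Suc j \<otimes> y = \<delta> \<otimes> y'" 
    using yc by (simp only: nat_pow_Suc2[OF delta_carrier]) (simp add: y'_def m_assoc)
  have "\<Delta> \<preceq> \<delta> \<otimes> (\<delta> \<otimes> y')"
    using Suc.prems(2) yc by (simp only: nat_pow_Suc2[OF delta_carrier] eq[symmetric]) (simp add: m_assoc)
  then have "\<omega> \<preceq> \<delta> \<otimes> y'"
    using leqL_mult_left_iff[of "inv \<delta>" \<Delta> "\<delta> \<otimes> (\<delta> \<otimes> y')"] y'c by simp
  moreover have "\<delta> \<preceq> \<delta> \<otimes> y'"
    using leqL_mult_right y'M by simp
  ultimately have "\<Delta> \<preceq> \<delta> [^] Suc j \<otimes> y"
    using Delta_leqL_of_omega_delta_leqL y'c eq by simp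
  then show ?case
    using Suc.IH Suc.prems(1) by blast
qed simp

lemma not_Delta_leqL_H_mult:
  assumes h: "h \<in> H" and a: "a \<in> M" "\<not> \<Delta> \<preceq> a" "\<not> \<omega> \<preceq> a"
  shows "\<not> \<Delta> \<preceq> h \<otimes> a"
proof
  assume le: "\<Delta> \<preceq> h \<otimes> a"
  have c: "h \<in> carrier G" "a \<in> carrier G"
    using h H_carrier a M_carrier by auto
  obtain j :: nat and w where w: "w \<in> N" "inv h = inv (\<delta> [^] j) \<otimes> w"
    using H_elem_inv_delta_pow_mult H_inv[OF h] by blast
  have wM: "w \<in> M" and wc: "w \<in> carrier G"
    using w N_subset_M M_carrier by auto
  have "inv h \<otimes> \<Delta> \<preceq> a"
    using leqL_mult_left_iff[of "inv h" \<Delta> "h \<otimes> a"] le c by simp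
  then have "inv (\<delta> [^] j) \<otimes> (w \<otimes> \<Delta>) \<preceq> a"
    using w(2) c wc by (simp add: m_assoc)
  then have "w \<otimes> \<Delta> \<preceq> \<delta> [^] j \<otimes> a"
    using leqL_mult_left_iff[of "\<delta> [^] j" "inv (\<delta> [^] j) \<otimes> (w \<otimes> \<Delta>)" a] wc c by simp
  have "\<Delta> \<preceq> w \<otimes> \<Delta>"
    using M_Delta_pow_conj(1)[OF wM, of 1] wc by (simp add: leqL_def m_assoc)
  then have "\<Delta> \<preceq> \<delta> [^] j \<otimes> a"
    by (rule leqL_trans) (use \<open>w \<otimes> \<Delta> \<preceq> \<delta> [^] j \<otimes> a\<close> wc c in auto)
  show False
  proof (cases j)
    case 0
    then show False
      using \<open>\<Delta> \<preceq> \<delta> [^] j \<otimes> a\<close> a(2) c by simp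
  next
    case (Suc j')
    then have "\<Delta> \<preceq> \<delta> \<otimes> a"
      using Delta_leqL_delta_mult_of_delta_pow_mult[OF a(1)] \<open>\<Delta> \<preceq> \<delta> [^] j \<otimes> a\<close> by blast
    then show False
      using leqL_mult_left_iff[of "inv \<delta>" \<Delta> "\<delta> \<otimes> a"] a(3) c by simp
  qed
qed

lemma word_len_H_mult_ge:
  assumes h: "h \<in> H" and a: "unmovable G M \<Delta> a" "N_reduced G M \<delta> a" and q: "q = 0 \<or> \<not> \<omega> \<preceq> a"
  shows "max (Delta_sup a) q \<le> word_len G simples (h \<otimes> (a \<otimes> inv (\<Delta> [^] q)))"
proof -
  have aM: "a \<in> M" and a_Delta: "\<not> \<Delta> \<preceq> a"
    using a(1) by (auto simp: unmovable_def)
  have c: "h \<in> carrier G" "a \<in> carrier G"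
    using h H_carrier aM M_carrier by auto
  have "h \<otimes> (a \<otimes> inv (\<Delta> [^] q)) \<in> carrier G"
    using c by simp
  then obtain k l :: nat where kl: "k + l = word_len G simples (h \<otimes> (a \<otimes> inv (\<Delta> [^] q)))"
    "h \<otimes> (a \<otimes> inv (\<Delta> [^] q)) \<preceq> \<Delta> [^] k" "inv (\<Delta> [^] l) \<preceq> h \<otimes> (a \<otimes> inv (\<Delta> [^] q))"
    by (rule word_len_between_Delta_pows)
  have "h \<otimes> a \<preceq> \<Delta> [^] (k + q)"
    using leqL_mult_Delta_pow[OF kl(2), of q] c by (simp add: m_assoc nat_pow_mult)
  then have "Delta_sup a \<le> k + q"
    using leqL_Delta_pow_of_H_mult[OF h a(2)] Delta_sup_le by blast
  moreover have "q \<le> l"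
  proof (rule ccontr)
    assume "\<not> q \<le> l"
    then obtain t where t: "q = l + Suc t"
      using less_iff_Suc_add by (auto simp: not_le)
    then have "\<not> \<omega> \<preceq> a"
      using q by simp
    have "inv (\<Delta> [^] l) \<otimes> \<Delta> [^] q \<preceq> h \<otimes> a"
      using leqL_mult_Delta_pow[OF kl(3), of q] c by (simp add: m_assoc)
    moreover have "inv (\<Delta> [^] l) \<otimes> \<Delta> [^] q = \<Delta> [^] Suc t"
      unfolding t nat_pow_mult[OF Delta_carrier, symmetric] by simp
    ultimately have upper: "\<Delta> [^] Suc t \<preceq> h \<otimes> a"
      by (simp only:)
    have "\<Delta> \<preceq> \<Delta> [^] Suc t"
      unfolding nat_pow_Suc2[OF Delta_carrier]
      by (rule leqL_mult_right[OF Delta_carrier M_pow_closed[OF Delta_in_M]])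
    then have "\<Delta> \<preceq> h \<otimes> a"
      by (rule leqL_trans[OF _ upper]) (use c in simp_all)
    then show False
      using not_Delta_leqL_H_mult[OF h aM a_Delta \<open>\<not> \<omega> \<preceq> a\<close>] by contradiction
  qed
  ultimately show ?thesis
    using kl(1) by linarith
qed

lemma HN_reduced_word_len_le_H_mult:
  assumes \<theta>: "HN_reduced G M \<Delta> \<delta> \<theta>" and h: "h \<in> H"
  shows "word_len G simples \<theta> \<le> word_len G simples (h \<otimes> \<theta>)"
proof -
  obtain a p where a: "unmovable G M \<Delta> a" "N_reduced G M \<delta> a" and "\<theta> = a \<otimes> \<Delta> [^] (p::int)"
    and p: "p = 0 \<or> (p < 0 \<and> \<not> \<omega> \<preceq> a)"
    using \<theta> by (auto simp: HN_reduced_def)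
  moreover define q where "q = nat (- p)"
  ultimately have \<theta>_eq: "\<theta> = a \<otimes> inv (\<Delta> [^] q)" and q: "q = 0 \<or> \<not> \<omega> \<preceq> a"
    using int_pow_neg_int[OF Delta_carrier, of q] by auto
  have aM: "a \<in> M"
    using a(1) by (simp add: unmovable_def)
  have "word_len G simples \<theta> \<le> max (Delta_sup a) q"
    unfolding \<theta>_eq using word_len_mult_inv_Delta_pow_le[OF aM leqL_Delta_pow_Delta_sup[OF aM]] .
  also have "\<dots> \<le> word_len G simples (h \<otimes> \<theta>)"
    unfolding \<theta>_eq using word_len_H_mult_ge[OF h a q] .
  finally show ?thesis .
qed

end

lemma parabolic_subgroupI:
  assumes "garside G M \<Delta>" "parabolic G M \<Delta> H N \<delta>"
  shows "parabolic_subgroup G M \<Delta> \<delta> H N"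
  using assms
  unfolding garside_def parabolic_def is_submonoid_def parabolic_subgroup_def parabolic_subgroup_axioms_def
    garside_group_def garside_group_axioms_def positive_monoid_def positive_monoid_axioms_def
  by blast

theorem theorem3p4:
  fixes G :: "('a, 'b) monoid_scheme" and M H N :: "'a set" and \<Delta> \<delta> \<theta> :: 'a
  assumes "garside G M \<Delta>"
    and "parabolic G M \<Delta> H N \<delta>"
    and "H \<noteq> {\<one>\<^bsub>G\<^esub>}"
    and "HN_reduced G M \<Delta> \<delta> \<theta>"
  shows "word_len G (Div G M \<Delta> - {\<one>\<^bsub>G\<^esub>}) \<theta>
         = set_len G (Div G M \<Delta> - {\<one>\<^bsub>G\<^esub>}) (H #>\<^bsub>G\<^esub> \<theta>)"
proof -
  interpret parabolic_subgroup G M \<Delta> \<delta> H N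
    using assms(1,2) by (rule parabolic_subgroupI)
  have "\<theta> \<in> carrier G"
    using assms(4) by (simp add: HN_reduced_def)
  then have "\<theta> \<in> H #>\<^bsub>G\<^esub> \<theta>"
    using H_one by (force simp: r_coset_def)
  moreover have "word_len G simples \<theta> \<le> word_len G simples \<beta>" if "\<beta> \<in> H #>\<^bsub>G\<^esub> \<theta>" for \<beta>
    using that HN_reduced_word_len_le_H_mult[OF assms(4)] by (auto simp: r_coset_def)
  ultimately show ?thesis
    by (rule set_len_eqI[symmetric])
qed

end
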